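(* Let $H:\mathbb{R}^2\to\mathbb{R}$ satisfy (C3), (CNH) and (CVX). Then: (UC) for every $h\in\mathbb{R}$ there exists $\mathcal{U}_h\in\mathbb{R}$ such that for all $(x,u)\in\mathbb{R}^2$, if $|H(x,u)|\le h$ then $|u|\le\mathcal{U}_h$; and (WGNL) for a.e. $x\in\mathbb{R}$ the set $\{w\in\mathbb{R}:\partial^2_{ww}H(x,w)=0\}$ has empty interior.
   Context: (C3) $H\in C^3(\mathbb{R}^2;\mathbb{R})$; (CNH) there exists $X>0$ such that $\partial_xH(x,p)=0$ for all $p$ whenever $|x|\ge X$; (CVX) for every $x\in\mathbb{R}$, $p\mapsto\partial_pH(x,p)$ is an increasing $C^1$-diffeomorphism of $\mathbb{R}$ onto itself. *)

theory Defs
  imports "HOL-Analysis.Analysis"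
begin

fun Ck2 :: "nat \<Rightarrow> (real \<times> real \<Rightarrow> real) \<Rightarrow> bool" where
  "Ck2 0 f = continuous_on UNIV f"
| "Ck2 (Suc k) f = (\<exists>f1 f2. (\<forall>z. (f has_derivative (\<lambda>(a, b). f1 z * a + f2 z * b)) (at z))
                          \<and> Ck2 k f1 \<and> Ck2 k f2)"

definition partial_x :: "(real \<times> real \<Rightarrow> real) \<Rightarrow> real \<Rightarrow> real \<Rightarrow> real" where
  "partial_x H x p = deriv (\<lambda>t. H (t, p)) x"

definition partial_p :: "(real \<times> real \<Rightarrow> real) \<Rightarrow> real \<Rightarrow> real \<Rightarrow> real" where
  "partial_p H x p = deriv (\<lambda>q. H (x, q)) p"

definition partial_pp :: "(real \<times> real \<Rightarrow> real) \<Rightarrow> real \<Rightarrow> real \<Rightarrow> real" where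
  "partial_pp H x p = deriv (\<lambda>q. partial_p H x q) p"

definition incr_C1_diffeo :: "(real \<Rightarrow> real) \<Rightarrow> bool" where
  "incr_C1_diffeo g \<longleftrightarrow> strict_mono g \<and> bij g \<and> g C1_differentiable_on UNIV
      \<and> inv g C1_differentiable_on UNIV"

end

theory Submission
  imports Defs
begin

text \<open>Since \<open>\<partial>\<^sub>x H\<close> vanishes for \<open>|x| \<ge> X\<close>, every value \<open>H(x,u)\<close> is already attained on the
  compact strip \<open>|x| \<le> X\<close>. There each \<open>\<partial>\<^sub>p H(x,\<cdot>)\<close> is increasing and onto \<open>\<real>\<close>, and
  compactness yields one threshold \<open>Q\<close> for all \<open>x\<close> with \<open>\<partial>\<^sub>p H(x,p) > 1\<close> for \<open>p \<ge> Q\<close> and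
  \<open>\<partial>\<^sub>p H(x,p) < -1\<close> for \<open>p \<le> -Q\<close>. So \<open>H(x,\<cdot>)\<close> grows at least linearly outside
  \<open>[-Q,Q]\<close>, uniformly in \<open>x\<close>, which bounds \<open>|u|\<close> on every set \<open>{|H| \<le> h}\<close>.
  (WGNL) holds for every \<open>x\<close>, not just almost every one: the strictly increasing
  differentiable function \<open>\<partial>\<^sub>p H(x,\<cdot>)\<close> cannot have vanishing derivative on an interval.\<close>

lemma Ck2_imp_continuous:
  assumes "Ck2 k f"
  shows "continuous_on UNIV f"
proof (cases k)
  case (Suc j)
  then obtain f1 f2 where "\<forall>z. (f has_derivative (\<lambda>(a, b). f1 z * a + f2 z * b)) (at z)"
    using assms by auto
  then show ?thesis
    using has_derivative_continuous continuous_at_imp_continuous_on by blast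
qed (use assms in simp)

lemma has_derivative_partials:
  fixes H :: "real \<times> real \<Rightarrow> real"
  assumes "(H has_derivative (\<lambda>(a, b). Hx * a + Hp * b)) (at (x, p))"
  shows "((\<lambda>t. H (t, p)) has_real_derivative Hx) (at x)"
    and "((\<lambda>q. H (x, q)) has_real_derivative Hp) (at p)"
proof -
  have "((\<lambda>t. (t, p)) has_derivative (\<lambda>a. (a, 0))) (at x)"
    by (auto intro!: derivative_eq_intros)
  from has_derivative_compose[OF this assms]
  show "((\<lambda>t. H (t, p)) has_real_derivative Hx) (at x)"
    by (simp add: has_field_derivative_def mult_commute_abs)
  have "((\<lambda>q. (x, q)) has_derivative (\<lambda>b. (0, b))) (at p)"
    by (auto intro!: derivative_eq_intros)
  from has_derivative_compose[OF this assms]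
  show "((\<lambda>q. H (x, q)) has_real_derivative Hp) (at p)"
    by (simp add: has_field_derivative_def mult_commute_abs)
qed

lemma Ck2_SucE:
  fixes H :: "real \<times> real \<Rightarrow> real"
  assumes "Ck2 (Suc k) H"
  obtains Hx Hp
  where "\<And>t p. ((\<lambda>t. H (t, p)) has_real_derivative Hx (t, p)) (at t)"
    and "\<And>x q. ((\<lambda>q. H (x, q)) has_real_derivative Hp (x, q)) (at q)"
    and "\<And>x p. partial_x H x p = Hx (x, p)"
    and "\<And>x p. partial_p H x p = Hp (x, p)"
    and "Ck2 k Hp"
proof -
  obtain Hx Hp where DH: "\<forall>z. (H has_derivative (\<lambda>(a, b). Hx z * a + Hp z * b)) (at z)"
    and "Ck2 k Hp"
    using assms by auto
  have DHx: "((\<lambda>t. H (t, p)) has_real_derivative Hx (t, p)) (at t)" for t p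
    using has_derivative_partials(1) DH by blast
  have DHp: "((\<lambda>q. H (x, q)) has_real_derivative Hp (x, q)) (at q)" for x q
    using has_derivative_partials(2) DH by blast
  show thesis
  proof
    show "partial_x H x p = Hx (x, p)" for x p
      using DHx by (simp add: partial_x_def DERIV_imp_deriv)
    show "partial_p H x p = Hp (x, p)" for x p
      using DHp by (simp add: partial_p_def DERIV_imp_deriv)
  qed (use DHx DHp \<open>Ck2 k Hp\<close> in auto)
qed

lemma DERIV_zero_outside_imp_value_in_interval:
  fixes f :: "real \<Rightarrow> real"
  assumes "0 \<le> X"
    and deriv: "\<And>t. (f has_real_derivative f' t) (at t)"
    and zero: "\<And>t. X \<le> \<bar>t\<bar> \<Longrightarrow> f' t = 0"
  shows "f t \<in> f ` {-X..X}"
proof -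
  have cont: "continuous_on S f" for S
    using deriv by (blast intro: DERIV_continuous_on has_field_derivative_at_within)
  have deriv0: "(f has_real_derivative 0) (at t)" if "X \<le> \<bar>t\<bar>" for t
    using deriv zero[OF that] by metis
  consider "X < t" | "t < -X" | "t \<in> {-X..X}" by fastforce
  then show ?thesis
  proof cases
    case 1
    have "f t = f X"
      by (rule DERIV_isconst2[OF 1 cont]) (use 1 deriv0 in auto)
    then show ?thesis using \<open>0 \<le> X\<close> by auto
  next
    case 2
    have "f (-X) = f t"
      by (rule DERIV_isconst2[OF 2 cont]) (use 2 deriv0 in auto)
    then show ?thesis using \<open>0 \<le> X\<close> by (auto intro!: image_eqI[of _ _ "-X"])
  qed simp
qed

lemma uniform_threshold_on_compact:
  fixes G :: "'a::topological_space \<Rightarrow> real \<Rightarrow> real"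
  assumes "compact K"
    and cont: "\<And>q. continuous_on UNIV (\<lambda>x. G x q)"
    and mono: "\<And>x. x \<in> K \<Longrightarrow> mono (G x)"
    and above: "\<And>x. x \<in> K \<Longrightarrow> \<exists>q. c < G x q"
  shows "\<exists>Q. \<forall>x\<in>K. \<forall>p\<ge>Q. c < G x p"
proof -
  have "open {x. c < G x q}" for q
    using cont by (simp add: open_Collect_less)
  moreover have "K \<subseteq> (\<Union>q. {x. c < G x q})"
    using above by blast
  ultimately obtain F where "finite F" and cover: "K \<subseteq> (\<Union>q\<in>F. {x. c < G x q})"
    using compactE_image[OF \<open>compact K\<close>, of UNIV] by metis
  have "c < G x p" if "x \<in> K" "Max (insert 0 F) \<le> p" for x p
  proof -
    obtain q where "q \<in> F" "c < G x q" using cover \<open>x \<in> K\<close> by blast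
    moreover have "q \<le> p"
      using \<open>q \<in> F\<close> \<open>finite F\<close> that(2) by (meson Max_ge finite_insert insertCI order_trans)
    ultimately show ?thesis
      using mono[OF \<open>x \<in> K\<close>] by (meson monoD order_less_le_trans)
  qed
  then show ?thesis by blast
qed

lemma DERIV_ge_imp_linear_growth:
  fixes f :: "real \<Rightarrow> real"
  assumes deriv: "\<And>q. Q \<le> q \<Longrightarrow> (f has_real_derivative f' q) (at q)"
    and slope: "\<And>q. Q \<le> q \<Longrightarrow> c \<le> f' q"
    and "Q \<le> u"
  shows "f Q + c * (u - Q) \<le> f u"
proof -
  let ?g = "\<lambda>v. f v - c * v"
  have dg: "(?g has_real_derivative f' q - c * 1) (at q)" if "Q \<le> q" for q
    by (intro DERIV_diff DERIV_cmult DERIV_ident deriv that)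
  have "?g Q \<le> ?g u"
  proof (rule DERIV_nonneg_imp_increasing_open[OF \<open>Q \<le> u\<close>])
    fix q assume "Q < q"
    then have "(?g has_real_derivative f' q - c * 1) (at q)" and "0 \<le> f' q - c * 1"
      using dg slope by auto
    then show "\<exists>y. (?g has_real_derivative y) (at q) \<and> 0 \<le> y"
      by blast
  next
    show "continuous_on {Q..u} ?g"
      by (rule DERIV_continuous_on) (auto intro: has_field_derivative_at_within dg)
  qed
  then show ?thesis by (simp add: algebra_simps)
qed

lemma sublevel_upper_bound_uniform_on_compact:
  fixes H Hp :: "'a::topological_space \<Rightarrow> real \<Rightarrow> real"
  assumes K: "compact K"
    and H_cont: "\<And>q. continuous_on UNIV (\<lambda>x. H x q)"
    and deriv: "\<And>x q. x \<in> K \<Longrightarrow> (H x has_real_derivative Hp x q) (at q)"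
    and Hp_cont: "\<And>q. continuous_on UNIV (\<lambda>x. Hp x q)"
    and mono: "\<And>x. x \<in> K \<Longrightarrow> mono (Hp x)"
    and above: "\<And>x. x \<in> K \<Longrightarrow> \<exists>q. 1 < Hp x q"
  shows "\<exists>U. \<forall>x\<in>K. \<forall>u. H x u \<le> h \<longrightarrow> u \<le> U"
proof -
  obtain Q where Q: "\<forall>x\<in>K. \<forall>p\<ge>Q. 1 < Hp x p"
    using uniform_threshold_on_compact[OF K Hp_cont mono above] by blast
  obtain m where m: "\<forall>x\<in>K. \<bar>H x Q\<bar> \<le> m"
    using compact_imp_bounded[OF compact_continuous_image[OF continuous_on_subset[OF H_cont] K]]
    unfolding bounded_iff by auto
  have "u \<le> max Q (h + m + Q)" if "x \<in> K" "H x u \<le> h" for x u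
  proof (cases "Q \<le> u")
    case True
    have "H x Q + 1 * (u - Q) \<le> H x u"
      by (rule DERIV_ge_imp_linear_growth[OF deriv[OF \<open>x \<in> K\<close>] _ True])
        (use Q \<open>x \<in> K\<close> in \<open>simp add: less_imp_le\<close>)
    then show ?thesis using m \<open>x \<in> K\<close> \<open>H x u \<le> h\<close> by fastforce
  qed simp
  then show ?thesis by blast
qed

lemma sublevel_bound_uniform_on_compact:
  fixes H Hp :: "'a::topological_space \<Rightarrow> real \<Rightarrow> real"
  assumes K: "compact K"
    and H_cont: "\<And>q. continuous_on UNIV (\<lambda>x. H x q)"
    and deriv: "\<And>x q. x \<in> K \<Longrightarrow> (H x has_real_derivative Hp x q) (at q)"
    and Hp_cont: "\<And>q. continuous_on UNIV (\<lambda>x. Hp x q)"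
    and mono: "\<And>x. x \<in> K \<Longrightarrow> mono (Hp x)"
    and surj: "\<And>x. x \<in> K \<Longrightarrow> surj (Hp x)"
  shows "\<exists>U. \<forall>x\<in>K. \<forall>u. \<bar>H x u\<bar> \<le> h \<longrightarrow> \<bar>u\<bar> \<le> U"
proof -
  have "\<exists>q. 1 < Hp x q" if x: "x \<in> K" for x
  proof -
    obtain q where "2 = Hp x q" using surjD[OF surj[OF x]] by blast
    then have "1 < Hp x q" by simp
    then show ?thesis by blast
  qed
  then obtain U1 where U1: "\<forall>x\<in>K. \<forall>u. H x u \<le> h \<longrightarrow> u \<le> U1"
    using sublevel_upper_bound_uniform_on_compact[OF K H_cont deriv Hp_cont mono] by blast
  have "\<exists>q. 1 < - Hp x (- q)" if x: "x \<in> K" for x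
  proof -
    obtain q where "- 2 = Hp x q" using surjD[OF surj[OF x]] by blast
    then have "1 < - Hp x (- (- q))" by simp
    then show ?thesis by blast
  qed
  moreover have "((\<lambda>q. H x (- q)) has_real_derivative - Hp x (- q)) (at q)" if "x \<in> K" for x q
    using DERIV_mirror[THEN iffD1, OF deriv[OF that, of "- q"]] .
  moreover have "mono (\<lambda>q. - Hp x (- q))" if "x \<in> K" for x
    using mono[OF that] by (simp add: mono_def)
  moreover have "continuous_on UNIV (\<lambda>x. H x (- q))" "continuous_on UNIV (\<lambda>x. - Hp x (- q))" for q
    using H_cont Hp_cont by (auto intro: continuous_on_minus)
  ultimately obtain U2 where U2: "\<forall>x\<in>K. \<forall>u. H x (- u) \<le> h \<longrightarrow> u \<le> U2"
    using sublevel_upper_bound_uniform_on_compact[OF K, of "\<lambda>x q. H x (- q)" "\<lambda>x q. - Hp x (- q)"]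
    by blast
  have "\<bar>u\<bar> \<le> max U1 U2" if "x \<in> K" "\<bar>H x u\<bar> \<le> h" for x u
  proof -
    have "u \<le> U1" "- u \<le> U2" using U1 U2 that by auto
    then show ?thesis by linarith
  qed
  then show ?thesis by blast
qed

lemma sublevel_bound_if_partial_x_vanishes_outside_strip:
  fixes H Hx Hp :: "real \<times> real \<Rightarrow> real"
  assumes "0 \<le> X"
    and DHx: "\<And>t p. ((\<lambda>t. H (t, p)) has_real_derivative Hx (t, p)) (at t)"
    and Hx_zero: "\<And>x p. X \<le> \<bar>x\<bar> \<Longrightarrow> Hx (x, p) = 0"
    and DHp: "\<And>x q. ((\<lambda>q. H (x, q)) has_real_derivative Hp (x, q)) (at q)"
    and H_cont: "continuous_on UNIV H" and Hp_cont: "continuous_on UNIV Hp"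
    and mono: "\<And>x. mono (\<lambda>q. Hp (x, q))" and surj: "\<And>x. surj (\<lambda>q. Hp (x, q))"
  shows "\<exists>U. \<forall>x u. \<bar>H (x, u)\<bar> \<le> h \<longrightarrow> \<bar>u\<bar> \<le> U"
proof -
  have "\<exists>U. \<forall>x\<in>{-X..X}. \<forall>u. \<bar>H (x, u)\<bar> \<le> h \<longrightarrow> \<bar>u\<bar> \<le> U"
    using mono surj DHp
    by (intro sublevel_bound_uniform_on_compact[of _ "\<lambda>x q. H (x, q)" "\<lambda>x q. Hp (x, q)"])
      (auto intro!: continuous_on_compose2[OF H_cont] continuous_on_compose2[OF Hp_cont]
        continuous_intros)
  then obtain U where U: "\<forall>x\<in>{-X..X}. \<forall>u. \<bar>H (x, u)\<bar> \<le> h \<longrightarrow> \<bar>u\<bar> \<le> U"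
    by blast
  have "\<bar>u\<bar> \<le> U" if "\<bar>H (x, u)\<bar> \<le> h" for x u
  proof -
    have "H (x, u) \<in> (\<lambda>t. H (t, u)) ` {-X..X}"
      using \<open>0 \<le> X\<close> DHx Hx_zero
      by (intro DERIV_zero_outside_imp_value_in_interval[of X _ "\<lambda>t. Hx (t, u)"]) auto
    then obtain t where "t \<in> {-X..X}" "H (t, u) = H (x, u)"
      by auto
    then show ?thesis using U that by auto
  qed
  then show ?thesis by blast
qed

lemma strict_mono_imp_interior_DERIV_zero_empty:
  fixes g :: "real \<Rightarrow> real"
  assumes "strict_mono g" and deriv: "\<And>q. (g has_real_derivative g' q) (at q)"
  shows "interior {w. g' w = 0} = {}"
proof (rule ccontr)
  assume "interior {w. g' w = 0} \<noteq> {}"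
  then obtain w e where "0 < e" and ball: "ball w e \<subseteq> {w. g' w = 0}"
    by (metis equals0I mem_interior)
  have "g w = g (w + e / 2)"
  proof (rule DERIV_isconst3[of "w - e" "w + e" w "w + e / 2" g])
    fix q assume "q \<in> {w - e<..<w + e}"
    then have "q \<in> ball w e" by (auto simp: dist_real_def)
    then have "g' q = 0" using ball by blast
    then show "(g has_real_derivative 0) (at q)" using deriv by metis
  qed (use \<open>0 < e\<close> in auto)
  moreover have "g w < g (w + e / 2)"
    using \<open>strict_mono g\<close> \<open>0 < e\<close> by (simp add: strict_monoD)
  ultimately show False by simp
qed

lemma incr_C1_diffeo_imp_interior_deriv_zero_empty:
  assumes "incr_C1_diffeo g"
  shows "interior {w. deriv g w = 0} = {}"
proof -
  have "strict_mono g" "g C1_differentiable_on UNIV"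
    using assms by (auto simp: incr_C1_diffeo_def)
  then show ?thesis
    by (intro strict_mono_imp_interior_DERIV_zero_empty)
      (auto simp: C1_differentiable_on_eq DERIV_deriv_iff_real_differentiable)
qed

theorem proposition2p4:
  fixes H :: "real \<times> real \<Rightarrow> real"
  assumes C3: "Ck2 3 H"
    and CNH: "\<exists>X>0. \<forall>x p. \<bar>x\<bar> \<ge> X \<longrightarrow> partial_x H x p = 0"
    and CVX: "\<forall>x. incr_C1_diffeo (\<lambda>p. partial_p H x p)"
  shows "(\<forall>h::real. \<exists>U::real. \<forall>x u. \<bar>H (x, u)\<bar> \<le> h \<longrightarrow> \<bar>u\<bar> \<le> U)
         \<and> (AE x in lborel. interior {w. partial_pp H x w = 0} = {})"
proof -
  obtain Hx Hp
    where DHx: "\<And>t p. ((\<lambda>t. H (t, p)) has_real_derivative Hx (t, p)) (at t)"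
      and DHp: "\<And>x q. ((\<lambda>q. H (x, q)) has_real_derivative Hp (x, q)) (at q)"
      and partial_x: "\<And>x p. partial_x H x p = Hx (x, p)"
      and partial_p: "\<And>x p. partial_p H x p = Hp (x, p)"
      and "Ck2 2 Hp"
    using C3 unfolding eval_nat_numeral(3) by (elim Ck2_SucE) blast
  have "continuous_on UNIV H" "continuous_on UNIV Hp"
    using C3 \<open>Ck2 2 Hp\<close> Ck2_imp_continuous by blast+
  moreover obtain X where "0 < X" and "\<And>x p. X \<le> \<bar>x\<bar> \<Longrightarrow> Hx (x, p) = 0"
    using CNH partial_x by metis
  moreover have "mono (\<lambda>q. Hp (x, q))" "surj (\<lambda>q. Hp (x, q))" for x
    using CVX by (auto simp: partial_p incr_C1_diffeo_def strict_mono_mono bij_is_surj)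
  ultimately have UC: "\<exists>U. \<forall>x u. \<bar>H (x, u)\<bar> \<le> h \<longrightarrow> \<bar>u\<bar> \<le> U" for h
    using DHx DHp
    by (intro sublevel_bound_if_partial_x_vanishes_outside_strip[where X = X and Hx = Hx and Hp = Hp])
      auto
  have WGNL: "interior {w. partial_pp H x w = 0} = {}" for x
    using incr_C1_diffeo_imp_interior_deriv_zero_empty CVX unfolding partial_pp_def by auto
  show ?thesis
    using UC WGNL by simp
qed

end
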